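(* Every scoring method $f:\mathcal{R}^n\to\mathbb{R}^n$ satisfying neutrality, symmetry and strong order preservation satisfies independence of irrelevant matches.
   Context: Let $N=\{X_1,\dots,X_n\}$. A ranking problem is a pair $(N,A)$ where $A=[a_{ij}]$ is a real $n\times n$ matrix with $a_{ii}=0$, $a_{ij}\ge0$ and $a_{ij}+a_{ji}$ a nonnegative integer for all $i\ne j$. Its results matrix is $R=A-A^\top$ and matches matrix $M=A+A^\top$; the problem is equivalently written $(N,R,M)$, and the sum of $(N,A)$ and $(N,A')$ is $(N,A+A')$. $\mathcal{R}^n$ is the set of ranking problems on $N$; a scoring method is a function $f:\mathcal{R}^n\to\mathbb{R}^n$. Neutrality: for a permutation $\sigma$ of $\{1,\dots,n\}$ let $\sigma(N,A)=(N,A^\sigma)$ with $a^\sigma_{\sigma(i)\sigma(j)}=a_{ij}$; $f$ is neutral if $f_{\sigma(i)}(\sigma(N,A))=f_i(N,A)$ for all $\sigma$, all problems and all $i$. Symmetry: if $R=O$ (zero matrix) then $f_i(N,R,M)=f_j(N,R,M)$ for all $X_i,X_j$. Strong order preservation: for all $(N,A),(N,A')\in\mathcal{R}^n$ and all $X_i,X_j$, if $f_i(N,A)\ge f_j(N,A)$ and $f_i(N,A')\ge f_j(N,A')$, then $f_i(N,A+A')\ge f_j(N,A+A')$, strictly if $f_i(N,A)>f_j(N,A)$ or $f_i(N,A')>f_j(N,A')$. Independence of irrelevant matches: for all $(N,A),(N,A')\in\mathcal{R}^n$ and all four pairwise different players $X_i,X_j,X_k,X_\ell$ such that $A$ and $A'$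 agree in every entry except possibly the entries $(k,\ell)$ and $(\ell,k)$, $f_i(N,A)\ge f_j(N,A)$ implies $f_i(N,A')\ge f_j(N,A')$. *)

theory Defs
  imports Complex_Main
begin

text \<open>Players are the elements of a finite type 'n (so n = CARD('n)).
  A matrix A is a function 'n => 'n => real; a scoring method is a function
  from matrices to score vectors 'n => real, only evaluated on ranking problems.\<close>

type_synonym 'n rmatrix = "'n \<Rightarrow> 'n \<Rightarrow> real"

definition ranking_problem :: "'n rmatrix \<Rightarrow> bool" where
  "ranking_problem A \<longleftrightarrow>
     (\<forall>i. A i i = 0) \<and>
     (\<forall>i j. i \<noteq> j \<longrightarrow> A i j \<ge> 0 \<and> A i j + A j i \<in> \<nat>)"

definition results_matrix :: "'n rmatrix \<Rightarrow> 'n rmatrix" where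
  "results_matrix A = (\<lambda>i j. A i j - A j i)"

definition matches_matrix :: "'n rmatrix \<Rightarrow> 'n rmatrix" where
  "matches_matrix A = (\<lambda>i j. A i j + A j i)"

definition rp_sum :: "'n rmatrix \<Rightarrow> 'n rmatrix \<Rightarrow> 'n rmatrix" where
  "rp_sum A A' = (\<lambda>i j. A i j + A' i j)"

text \<open>sigma(N,A) = (N, A^sigma) with A^sigma (sigma i) (sigma j) = A i j.\<close>
definition permute_rp :: "('n \<Rightarrow> 'n) \<Rightarrow> 'n rmatrix \<Rightarrow> 'n rmatrix" where
  "permute_rp \<sigma> A = (\<lambda>x y. A (inv \<sigma> x) (inv \<sigma> y))"

definition neutral :: "('n rmatrix \<Rightarrow> 'n \<Rightarrow> real) \<Rightarrow> bool" where
  "neutral f \<longleftrightarrow> (\<forall>\<sigma> A i. bij \<sigma> \<longrightarrow> ranking_problem A \<longrightarrow>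
      f (permute_rp \<sigma> A) (\<sigma> i) = f A i)"

definition symmetric_method :: "('n rmatrix \<Rightarrow> 'n \<Rightarrow> real) \<Rightarrow> bool" where
  "symmetric_method f \<longleftrightarrow> (\<forall>A. ranking_problem A \<longrightarrow>
      results_matrix A = (\<lambda>i j. 0) \<longrightarrow> (\<forall>i j. f A i = f A j))"

definition strong_order_preservation :: "('n rmatrix \<Rightarrow> 'n \<Rightarrow> real) \<Rightarrow> bool" where
  "strong_order_preservation f \<longleftrightarrow> (\<forall>A A' i j.
      ranking_problem A \<longrightarrow> ranking_problem A' \<longrightarrow>
      f A i \<ge> f A j \<longrightarrow> f A' i \<ge> f A' j \<longrightarrow>
      f (rp_sum A A') i \<ge> f (rp_sum A A') j \<and>
      ((f A i > f A j \<or> f A' i > f A' j) \<longrightarrow> f (rp_sum A A') i > f (rp_sum A A') j))"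

definition indep_irrelevant_matches :: "('n rmatrix \<Rightarrow> 'n \<Rightarrow> real) \<Rightarrow> bool" where
  "indep_irrelevant_matches f \<longleftrightarrow> (\<forall>A A' i j k l.
      ranking_problem A \<longrightarrow> ranking_problem A' \<longrightarrow>
      distinct [i, j, k, l] \<longrightarrow>
      (\<forall>x y. (x, y) \<noteq> (k, l) \<and> (x, y) \<noteq> (l, k) \<longrightarrow> A x y = A' x y) \<longrightarrow>
      f A i \<ge> f A j \<longrightarrow> f A' i \<ge> f A' j)"

end

theory Submission
  imports Defs "HOL-Combinatorics.Transposition"
begin

text \<open>Split a ranking problem into its matches between the players k and l and all other
  matches. By neutrality the (k, l)-part alone ties every two players i, j outside {k, l},
  since swapping i and j leaves it unchanged. By strong order preservation, adding a problem
  in which i and j tie does not change the order of i and j: a strict reversal would survive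
  the addition. Hence the order of i and j in A is that of the common remaining part, and
  likewise in A'.\<close>

definition pair_part :: "'n \<Rightarrow> 'n \<Rightarrow> 'n rmatrix \<Rightarrow> 'n rmatrix" where
  "pair_part k l A = (\<lambda>x y. if {x, y} = {k, l} then A x y else 0)"

definition off_pair_part :: "'n \<Rightarrow> 'n \<Rightarrow> 'n rmatrix \<Rightarrow> 'n rmatrix" where
  "off_pair_part k l A = (\<lambda>x y. if {x, y} = {k, l} then 0 else A x y)"

lemma ranking_problem_pair_part:
  "ranking_problem A \<Longrightarrow> ranking_problem (pair_part k l A)"
  unfolding ranking_problem_def pair_part_def by auto

lemma ranking_problem_off_pair_part:
  "ranking_problem A \<Longrightarrow> ranking_problem (off_pair_part k l A)"
  unfolding ranking_problem_def off_pair_part_def by auto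

lemma rp_sum_off_pair_part_pair_part:
  "rp_sum (off_pair_part k l A) (pair_part k l A) = A"
  unfolding rp_sum_def off_pair_part_def pair_part_def by (simp add: fun_eq_iff)

lemma off_pair_part_eqI:
  assumes "\<And>x y. (x, y) \<noteq> (k, l) \<Longrightarrow> (x, y) \<noteq> (l, k) \<Longrightarrow> A x y = A' x y"
  shows "off_pair_part k l A = off_pair_part k l A'"
  unfolding off_pair_part_def using assms by (auto simp: doubleton_eq_iff fun_eq_iff)

lemma permute_rp_transpose_pair_part:
  assumes "i \<notin> {k, l}" "j \<notin> {k, l}"
  shows "permute_rp (transpose i j) (pair_part k l A) = pair_part k l A"
  using assms by (auto simp: permute_rp_def pair_part_def doubleton_eq_iff transpose_def fun_eq_iff)

lemma neutral_score_eq_if_permute_rp_fixed: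
  assumes "neutral f" "ranking_problem A" "bij \<sigma>" "permute_rp \<sigma> A = A"
  shows "f A (\<sigma> i) = f A i"
  using assms unfolding neutral_def by metis

lemma neutral_pair_part_tie:
  assumes "neutral f" "ranking_problem A" "i \<notin> {k, l}" "j \<notin> {k, l}"
  shows "f (pair_part k l A) i = f (pair_part k l A) j"
  using neutral_score_eq_if_permute_rp_fixed[OF assms(1) ranking_problem_pair_part[OF assms(2)]
      bij_transpose permute_rp_transpose_pair_part[OF assms(3,4)], of i]
  by simp

lemma strong_order_preservation_add_tie_iff:
  assumes "strong_order_preservation f" "ranking_problem A" "ranking_problem B"
    and "f B i = f B j"
  shows "f (rp_sum A B) i \<ge> f (rp_sum A B) j \<longleftrightarrow> f A i \<ge> f A j"
proof
  assume "f A i \<ge> f A j"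
  then show "f (rp_sum A B) i \<ge> f (rp_sum A B) j"
    using assms unfolding strong_order_preservation_def by simp
next
  assume sum_ge: "f (rp_sum A B) i \<ge> f (rp_sum A B) j"
  show "f A i \<ge> f A j"
  proof (rule ccontr)
    assume "\<not> f A i \<ge> f A j"
    then have "f (rp_sum A B) j > f (rp_sum A B) i"
      using assms unfolding strong_order_preservation_def by force
    with sum_ge show False by simp
  qed
qed

lemma order_determined_by_off_pair_part:
  assumes "neutral f" "strong_order_preservation f" "ranking_problem A"
    and "i \<notin> {k, l}" "j \<notin> {k, l}"
  shows "f A i \<ge> f A j \<longleftrightarrow> f (off_pair_part k l A) i \<ge> f (off_pair_part k l A) j"
  using strong_order_preservation_add_tie_iff[OF assms(2)
      ranking_problem_off_pair_part[OF assms(3), of k l] ranking_problem_pair_part[OF assms(3)]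
      neutral_pair_part_tie[OF assms(1,3-5)]]
  by (simp add: rp_sum_off_pair_part_pair_part)

theorem proposition4p1:
  fixes f :: "('n::finite) rmatrix \<Rightarrow> 'n \<Rightarrow> real"
  assumes "neutral f"
    and "symmetric_method f"
    and "strong_order_preservation f"
  shows "indep_irrelevant_matches f"
  unfolding indep_irrelevant_matches_def
proof (intro allI impI)
  fix A A' :: "'n rmatrix" and i j k l
  assume A: "ranking_problem A" and A': "ranking_problem A'" and d: "distinct [i, j, k, l]"
    and agree: "\<forall>x y. (x, y) \<noteq> (k, l) \<and> (x, y) \<noteq> (l, k) \<longrightarrow> A x y = A' x y"
    and "f A i \<ge> f A j"
  have ij: "i \<notin> {k, l}" "j \<notin> {k, l}" using d by auto
  have "off_pair_part k l A = off_pair_part k l A'"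
    using agree by (intro off_pair_part_eqI) blast
  with \<open>f A i \<ge> f A j\<close> show "f A' i \<ge> f A' j"
    using order_determined_by_off_pair_part[OF assms(1,3) _ ij] A A' by metis
qed

end
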